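(* Let $U\subseteq\mathbb{R}$ be a nonempty open set and $A\subseteq\mathbb{R}$ a set that is both meager and Lebesgue null. Then there are pairwise disjoint sets $D_k\subseteq U$ and reals $x_k$ ($k\in\omega$) such that $\bigcup_{k\in\omega}D_k$ is nowhere dense and $A\subseteq\bigcup_{k\in\omega}(D_k+x_k)$.
   Context: $D+x=\{d+x:d\in D\}$. *)

theory Defs
  imports "HOL-Analysis.Analysis"
begin

definition nowhere_dense :: "'a::topological_space set \<Rightarrow> bool" where
  "nowhere_dense S \<longleftrightarrow> interior (closure S) = {}"

definition meager :: "'a::topological_space set \<Rightarrow> bool" where
  "meager A \<longleftrightarrow> (\<exists>F :: nat \<Rightarrow> 'a set. (\<forall>n. nowhere_dense (F n)) \<and> A \<subseteq> (\<Union>n. F n))"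

end

theory Submission
  imports Defs
begin

text \<open>
  A null set is covered by half-open intervals of arbitrarily small total length, and a meager
  set by nowhere dense sets \<open>F n\<close>. Covering \<open>A\<close> for each \<open>n\<close> by intervals \<open>I n i\<close> of total
  length at most \<open>e / 2^(n+1)\<close>, the pieces \<open>A \<inter> F n \<inter> I n i\<close> are nowhere dense, cover \<open>A\<close> and
  have total length at most \<open>e\<close>. Translating the pieces into consecutive slots
  \<open>[c + s k, c + s (k+1))\<close> of \<open>[c, c + e) \<subseteq> U\<close>, where \<open>s\<close> are the partial sums of the lengths,
  gives disjoint sets \<open>D k\<close>. Their union is nowhere dense: every point except the accumulation
  point \<open>c + sup s\<close> has a neighbourhood meeting only finitely many of them.
\<close>

lemma nowhere_dense_subset: "nowhere_dense T \<Longrightarrow> S \<subseteq> T \<Longrightarrow> nowhere_dense S"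
  unfolding nowhere_dense_def by (metis closure_mono interior_mono subset_empty)

lemma nowhere_dense_translation:
  fixes S :: "'a::real_normed_vector set"
  shows "nowhere_dense S \<Longrightarrow> nowhere_dense ((+) a ` S)"
  unfolding nowhere_dense_def by (simp add: closure_translation interior_translation)

lemma nowhere_dense_Un:
  "nowhere_dense S \<Longrightarrow> nowhere_dense T \<Longrightarrow> nowhere_dense (S \<union> T)"
  unfolding nowhere_dense_def closure_Un by (simp add: interior_closed_Un_empty_interior)

lemma nowhere_dense_finite_UN:
  "finite K \<Longrightarrow> (\<And>k. k \<in> K \<Longrightarrow> nowhere_dense (D k)) \<Longrightarrow> nowhere_dense (\<Union>k\<in>K. D k)"
  by (induction K rule: finite_induct) (auto simp: nowhere_dense_Un, simp add: nowhere_dense_def)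

lemma nowhere_dense_UN_locally_finite:
  fixes D :: "'i \<Rightarrow> 'a::{perfect_space,t1_space} set"
  assumes nd: "\<And>k. nowhere_dense (D k)"
    and locally_finite: "\<And>y. y \<noteq> q \<Longrightarrow> \<exists>V. open V \<and> y \<in> V \<and> finite {k. D k \<inter> V \<noteq> {}}"
  shows "nowhere_dense (\<Union>k. D k)"
  unfolding nowhere_dense_def
proof (rule ccontr)
  define W where "W = interior (closure (\<Union>k. D k)) - {q}"
  assume "interior (closure (\<Union>k. D k)) \<noteq> {}"
  then have "W \<noteq> {}"
    unfolding W_def by (metis Diff_eq_empty_iff not_open_singleton open_interior subset_singleton_iff)
  then obtain y where y: "y \<in> W" by blast
  then obtain V where V: "open V" "y \<in> V" and fin: "finite {k. D k \<inter> V \<noteq> {}}"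
    using locally_finite unfolding W_def by blast
  have "open (W \<inter> V)"
    unfolding W_def using V by (intro open_Int open_Diff) auto
  have "W \<inter> V \<subseteq> (W \<inter> V) \<inter> closure (\<Union>k. D k)"
    unfolding W_def using interior_subset by blast
  also have "\<dots> \<subseteq> closure ((W \<inter> V) \<inter> (\<Union>k. D k))"
    using \<open>open (W \<inter> V)\<close> by (rule open_Int_closure_subset)
  also have "\<dots> \<subseteq> closure (\<Union>k\<in>{k. D k \<inter> V \<noteq> {}}. D k)"
    by (rule closure_mono) blast
  finally have "W \<inter> V \<subseteq> interior (closure (\<Union>k\<in>{k. D k \<inter> V \<noteq> {}}. D k))"
    using \<open>open (W \<inter> V)\<close> by (rule interior_maximal)
  also have "\<dots> = {}"
    using nowhere_dense_finite_UN[OF fin nd] by (simp add: nowhere_dense_def)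
  finally show False using y V by blast
qed

lemma disjoint_family_consecutive:
  fixes s :: "nat \<Rightarrow> 'a::linorder"
  assumes "mono s" and D: "\<And>k. D k \<subseteq> {s k..<s (Suc k)}"
  shows "disjoint_family D"
proof -
  have "D i \<inter> D j = {}" if "i < j" for i j
  proof -
    have "s (Suc i) \<le> s j" using monoD[OF \<open>mono s\<close>] that by simp
    then show ?thesis using D[of i] D[of j] by fastforce
  qed
  then show ?thesis
    unfolding disjoint_family_on_def by (metis inf_commute linorder_neqE_nat)
qed

lemma nowhere_dense_UN_consecutive:
  fixes s :: "nat \<Rightarrow> 'a::{conditionally_complete_linorder,linorder_topology,perfect_space}"
  assumes "mono s" and bdd: "bdd_above (range s)"
    and D: "\<And>k. D k \<subseteq> {s k..<s (Suc k)}" and "\<And>k. nowhere_dense (D k)"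
  shows "nowhere_dense (\<Union>k. D k)"
proof (rule nowhere_dense_UN_locally_finite)
  fix y assume "y \<noteq> Sup (range s)"
  then consider "Sup (range s) < y" | "y < Sup (range s)" by (meson linorder_neqE)
  then show "\<exists>V. open V \<and> y \<in> V \<and> finite {k. D k \<inter> V \<noteq> {}}"
  proof cases
    case 1
    have "D k \<inter> {Sup (range s)<..} = {}" for k
    proof -
      have "s (Suc k) \<le> Sup (range s)" using bdd by (simp add: cSUP_upper)
      then show ?thesis using D[of k] by fastforce
    qed
    with 1 show ?thesis by (intro exI[of _ "{Sup (range s)<..}"]) auto
  next
    case 2
    then obtain k0 where "y < s k0"
      using less_cSUP_iff[OF _ bdd] by blast
    have "k < k0" if "D k \<inter> {..<s k0} \<noteq> {}" for k
    proof (rule ccontr)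
      assume "\<not> k < k0"
      then have "s k0 \<le> s k" using monoD[OF \<open>mono s\<close>] by simp
      then show False using that D[of k] by fastforce
    qed
    then have "{k. D k \<inter> {..<s k0} \<noteq> {}} \<subseteq> {..<k0}" by blast
    with \<open>y < s k0\<close> show ?thesis
      by (intro exI[of _ "{..<s k0}"]) (auto intro: finite_subset)
  qed
qed (use assms in auto)

lemma translate_into_consecutive_intervals:
  fixes P :: "nat \<Rightarrow> real set" and a l :: "nat \<Rightarrow> real"
  assumes l: "\<And>k. 0 \<le> l k" and P: "\<And>k. P k \<subseteq> {a k..<a k + l k}"
    and nd: "\<And>k. nowhere_dense (P k)" and sum: "\<And>K. (\<Sum>k<K. l k) \<le> e"
  obtains D :: "nat \<Rightarrow> real set" and x :: "nat \<Rightarrow> real"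
  where "\<And>k. D k \<subseteq> {c..<c + e}" and "disjoint_family D" and "nowhere_dense (\<Union>k. D k)"
    and "\<And>k. (\<lambda>d. d + x k) ` D k = P k"
proof
  define s where "s k = c + (\<Sum>j<k. l j)" for k
  define x where "x k = a k - s k" for k
  define D where "D k = (+) (- x k) ` P k" for k
  have "mono s"
    unfolding s_def mono_def by (auto intro: sum_mono2 l)
  have D_slot: "D k \<subseteq> {s k..<s (Suc k)}" for k
    using P[of k] by (auto simp: D_def x_def s_def)
  have s_bounds: "c \<le> s k" "s k \<le> c + e" for k
    using sum[of k] by (auto simp: s_def sum_nonneg l)
  show "D k \<subseteq> {c..<c + e}" for k
    using D_slot[of k] s_bounds[of k] s_bounds[of "Suc k"] by fastforce
  show "disjoint_family D"
    using \<open>mono s\<close> D_slot by (rule disjoint_family_consecutive)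
  have "bdd_above (range s)"
    using s_bounds(2) by (intro bdd_aboveI2)
  with \<open>mono s\<close> show "nowhere_dense (\<Union>k. D k)"
    using D_slot by (rule nowhere_dense_UN_consecutive) (unfold D_def, intro nowhere_dense_translation nd)
  show "(\<lambda>d. d + x k) ` D k = P k" for k
    by (simp add: D_def image_image)
qed

definition dyadic_interval :: "nat \<Rightarrow> int \<Rightarrow> real set" where
  "dyadic_interval m j = {of_int j / 2^m ..< (of_int j + 1) / 2^m}"

lemma mem_dyadic_interval_iff: "z \<in> dyadic_interval m j \<longleftrightarrow> \<lfloor>z * 2^m\<rfloor> = j"
  unfolding dyadic_interval_def by (simp add: floor_eq_iff pos_divide_le_eq pos_less_divide_eq)

lemma floor_mult_power2_le:
  fixes z :: real
  assumes "n \<le> m"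
  shows "\<lfloor>z * 2^n\<rfloor> = \<lfloor>z * 2^m\<rfloor> div 2^(m - n)"
proof -
  have m: "m = n + (m - n)"
    using assms by simp
  have "z * 2^n = (z * 2^m) / real_of_int (2^(m - n))"
    by (subst m) (simp add: power_add)
  then show ?thesis
    using floor_divide_real_eq_div[of "2^(m - n)" "z * 2^m"] by simp
qed

lemma dyadic_interval_nested:
  assumes "n \<le> m" and "dyadic_interval m j \<inter> dyadic_interval n i \<noteq> {}"
  shows "dyadic_interval m j \<subseteq> dyadic_interval n i"
  using assms floor_mult_power2_le[OF \<open>n \<le> m\<close>] by (auto simp: mem_dyadic_interval_iff)

lemma dyadic_interval_subset_ball:
  assumes "z \<in> dyadic_interval m j"
  shows "dyadic_interval m j \<subseteq> ball z (1 / 2^m)"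
proof
  fix w assume "w \<in> dyadic_interval m j"
  moreover have "(of_int j + 1) / 2^m = of_int j / 2^m + 1 / (2^m :: real)"
    by (simp add: add_divide_distrib)
  ultimately show "w \<in> ball z (1 / 2^m)"
    using assms unfolding dyadic_interval_def by (auto simp: dist_real_def abs_less_iff)
qed

lemma open_imp_dyadic_interval_subset:
  assumes "open G" and "z \<in> G"
  shows "\<exists>m. dyadic_interval m \<lfloor>z * 2^m\<rfloor> \<subseteq> G"
proof -
  obtain d where "d > 0" "ball z d \<subseteq> G"
    using assms open_contains_ball by blast
  moreover obtain m where "(1/2::real)^m < d"
    using real_arch_pow_inv[of d "1/2"] \<open>d > 0\<close> by auto
  ultimately have "ball z (1 / 2^m) \<subseteq> G"
    by (metis less_imp_le order_trans power_one_over subset_ball)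
  then show ?thesis
    using dyadic_interval_subset_ball[of z m] by (auto simp: mem_dyadic_interval_iff)
qed

text \<open>As dyadic intervals are nested or disjoint, this says that no coarser dyadic interval inside
  \<open>G\<close> contains the given one.\<close>
definition maximal_dyadic_in :: "real set \<Rightarrow> nat \<Rightarrow> int \<Rightarrow> bool" where
  "maximal_dyadic_in G m j \<longleftrightarrow> dyadic_interval m j \<subseteq> G \<and>
     (\<forall>n<m. \<forall>i. dyadic_interval n i \<subseteq> G \<longrightarrow> dyadic_interval n i \<inter> dyadic_interval m j = {})"

lemma maximal_dyadic_in_disjoint:
  assumes "maximal_dyadic_in G m j" and "maximal_dyadic_in G m' j'" and "(m, j) \<noteq> (m', j')"
  shows "dyadic_interval m j \<inter> dyadic_interval m' j' = {}"
proof -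
  consider "m = m'" | "m < m'" | "m' < m" by linarith
  then show ?thesis
  proof cases
    case 1
    with assms(3) show ?thesis by (auto simp: mem_dyadic_interval_iff)
  qed (use assms in \<open>auto simp: maximal_dyadic_in_def\<close>)
qed

lemma open_imp_mem_maximal_dyadic:
  assumes "open G" and "z \<in> G"
  shows "\<exists>m j. maximal_dyadic_in G m j \<and> z \<in> dyadic_interval m j"
proof -
  define m where "m = (LEAST m. dyadic_interval m \<lfloor>z * 2^m\<rfloor> \<subseteq> G)"
  have "dyadic_interval m \<lfloor>z * 2^m\<rfloor> \<subseteq> G"
    unfolding m_def using open_imp_dyadic_interval_subset[OF assms] by (rule LeastI_ex)
  moreover have "dyadic_interval n i \<inter> dyadic_interval m \<lfloor>z * 2^m\<rfloor> = {}"
    if "n < m" and "dyadic_interval n i \<subseteq> G" for n i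
  proof (rule ccontr)
    assume "dyadic_interval n i \<inter> dyadic_interval m \<lfloor>z * 2^m\<rfloor> \<noteq> {}"
    then have "z \<in> dyadic_interval n i"
      using dyadic_interval_nested[of n m] \<open>n < m\<close> by (fastforce simp: mem_dyadic_interval_iff)
    then have "dyadic_interval n \<lfloor>z * 2^n\<rfloor> \<subseteq> G"
      using \<open>dyadic_interval n i \<subseteq> G\<close> by (simp add: mem_dyadic_interval_iff)
    then show False
      using \<open>n < m\<close> not_less_Least unfolding m_def by blast
  qed
  ultimately show ?thesis
    unfolding maximal_dyadic_in_def by (auto simp: mem_dyadic_interval_iff intro!: exI[of _ m])
qed

lemma open_eq_disjoint_UN_intervals:
  fixes G :: "real set"
  assumes "open G"
  obtains a l :: "nat \<Rightarrow> real"
  where "G = (\<Union>k. {a k..<a k + l k})" and "disjoint_family (\<lambda>k. {a k..<a k + l k})"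
    and "\<And>k. 0 \<le> l k"
proof -
  obtain dec :: "nat \<Rightarrow> nat \<times> int" where "bij dec"
    using bij_betw_from_nat_into[of "UNIV :: (nat \<times> int) set"] by (auto simp: finite_prod)
  define a :: "nat \<Rightarrow> real" where "a k = (case dec k of (m, j) \<Rightarrow> of_int j / 2^m)" for k
  define l :: "nat \<Rightarrow> real"
    where "l k = (case dec k of (m, j) \<Rightarrow> if maximal_dyadic_in G m j then 1 / 2^m else 0)" for k
  have I: "{a k..<a k + l k} =
      (case dec k of (m, j) \<Rightarrow> if maximal_dyadic_in G m j then dyadic_interval m j else {})" for k
    by (auto simp: a_def l_def dyadic_interval_def add_divide_distrib split: prod.split)
  show ?thesis
  proof
    show "0 \<le> l k" for k
      by (simp add: l_def split: prod.split)
    show "disjoint_family (\<lambda>k. {a k..<a k + l k})"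
      unfolding disjoint_family_on_def
    proof (intro ballI impI)
      fix k k' :: nat assume "k \<noteq> k'"
      obtain m j m' j' where mj: "dec k = (m, j)" "dec k' = (m', j')"
        by fastforce
      have "(m, j) \<noteq> (m', j')"
        using \<open>k \<noteq> k'\<close> \<open>bij dec\<close> mj by (metis bij_is_inj injD)
      then show "{a k..<a k + l k} \<inter> {a k'..<a k' + l k'} = {}"
        unfolding I mj using maximal_dyadic_in_disjoint[of G m j m' j'] by simp
    qed
    show "G = (\<Union>k. {a k..<a k + l k})"
    proof
      show "G \<subseteq> (\<Union>k. {a k..<a k + l k})"
      proof
        fix z assume "z \<in> G"
        then obtain m j where "maximal_dyadic_in G m j" "z \<in> dyadic_interval m j"
          using open_imp_mem_maximal_dyadic[OF \<open>open G\<close>] by blast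
        moreover have "dec (inv dec (m, j)) = (m, j)"
          using \<open>bij dec\<close> by (simp add: bij_is_surj surj_f_inv_f)
        ultimately have "z \<in> {a (inv dec (m, j))..<a (inv dec (m, j)) + l (inv dec (m, j))}"
          unfolding I by simp
        then show "z \<in> (\<Union>k. {a k..<a k + l k})" by blast
      qed
      show "(\<Union>k. {a k..<a k + l k}) \<subseteq> G"
        unfolding I by (auto simp: maximal_dyadic_in_def split: prod.splits if_splits)
    qed
  qed
qed

lemma null_set_interval_cover:
  fixes A :: "real set"
  assumes "A \<in> null_sets lebesgue" and "0 < e"
  obtains a l :: "nat \<Rightarrow> real"
  where "A \<subseteq> (\<Union>k. {a k..<a k + l k})" and "\<And>K. (\<Sum>k<K. l k) \<le> e" and "\<And>k. 0 \<le> l k"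
proof -
  obtain G where "open G" "A \<subseteq> G"
    and GA: "G - A \<in> lmeasurable" "emeasure lebesgue (G - A) < ennreal e"
    using sets_lebesgue_outer_open[OF null_setsD2[OF assms(1)] \<open>0 < e\<close>] by blast
  have "G = (G - A) \<union> A"
    using \<open>A \<subseteq> G\<close> by blast
  then have "G \<in> lmeasurable"
    using GA(1) assms(1) by (metis fmeasurableI_null_sets fmeasurable.Un)
  have "measure lebesgue G = measure lebesgue (G - A)"
    using \<open>G \<in> lmeasurable\<close> assms(1) by (simp add: measure_Diff_null_set)
  also have "\<dots> \<le> e"
    using GA by (metis emeasure_eq_measure2 ennreal_leI linorder_not_le order.asym)
  finally have "measure lebesgue G \<le> e" .
  obtain a l :: "nat \<Rightarrow> real" where G: "G = (\<Union>k. {a k..<a k + l k})"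
    and disj: "disjoint_family (\<lambda>k. {a k..<a k + l k})" and l: "\<And>k. 0 \<le> l k"
    by (rule open_eq_disjoint_UN_intervals[OF \<open>open G\<close>]) blast
  have sum_le: "(\<Sum>k<K. l k) \<le> e" for K
  proof -
    have "(\<Sum>k<K. l k) = measure lebesgue (\<Union>k<K. {a k..<a k + l k})"
      using l disj by (subst measure_finite_Union) (auto simp: disjoint_family_on_def)
    also have "\<dots> \<le> measure lebesgue G"
      using \<open>G \<in> lmeasurable\<close> G by (intro measure_mono_fmeasurable) auto
    finally show ?thesis
      using \<open>measure lebesgue G \<le> e\<close> by linarith
  qed
  from \<open>A \<subseteq> G\<close> have "A \<subseteq> (\<Union>k. {a k..<a k + l k})"
    unfolding G .
  from this sum_le l show ?thesis
    by (rule that)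
qed

lemma sum_prod_decode_le:
  fixes l :: "nat \<Rightarrow> nat \<Rightarrow> 'a::ordered_comm_monoid_add"
  assumes "\<And>n i. 0 \<le> l n i"
  shows "(\<Sum>k<K. case_prod l (prod_decode k)) \<le> (\<Sum>n<K. \<Sum>i<K. l n i)"
proof -
  have "prod_decode ` {..<K} \<subseteq> {..<K} \<times> {..<K}"
  proof
    fix q assume "q \<in> prod_decode ` {..<K}"
    then obtain k where "k < K" "q = prod_decode k" by blast
    moreover obtain n i where "q = (n, i)" by fastforce
    ultimately have "prod_encode (n, i) < K"
      by (metis prod_decode_inverse)
    then show "q \<in> {..<K} \<times> {..<K}"
      using le_prod_encode_1[of n i] le_prod_encode_2[of i n] \<open>q = (n, i)\<close> by simp
  qed
  then have "(\<Sum>k<K. case_prod l (prod_decode k)) \<le> (\<Sum>q\<in>{..<K} \<times> {..<K}. case_prod l q)"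
    by (simp add: sum.reindex[OF inj_prod_decode, unfolded comp_def, symmetric] sum_mono2 assms split: prod.split)
  also have "\<dots> = (\<Sum>n<K. \<Sum>i<K. l n i)"
    by (simp add: sum.cartesian_product)
  finally show ?thesis .
qed

lemma meager_null_set_pieces:
  fixes A :: "real set"
  assumes "meager A" and "A \<in> null_sets lebesgue" and "0 < e"
  obtains P :: "nat \<Rightarrow> real set" and a l :: "nat \<Rightarrow> real"
  where "A \<subseteq> (\<Union>k. P k)" and "\<And>k. P k \<subseteq> {a k..<a k + l k}" and "\<And>k. nowhere_dense (P k)"
    and "\<And>K. (\<Sum>k<K. l k) \<le> e" and "\<And>k. 0 \<le> l k"
proof -
  obtain F :: "nat \<Rightarrow> real set"
    where F_nd: "\<And>n. nowhere_dense (F n)" and A_F: "A \<subseteq> (\<Union>n. F n)"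
    using assms(1) unfolding meager_def by blast
  have "\<exists>a l :: nat \<Rightarrow> real. A \<subseteq> (\<Union>k. {a k..<a k + l k}) \<and>
      (\<forall>K. (\<Sum>k<K. l k) \<le> e * (1/2)^Suc n) \<and> (\<forall>k. 0 \<le> l k)" for n
  proof -
    have "0 < e * (1/2)^Suc n"
      using \<open>0 < e\<close> by simp
    then obtain a l :: "nat \<Rightarrow> real" where "A \<subseteq> (\<Union>k. {a k..<a k + l k})"
      and "\<And>K. (\<Sum>k<K. l k) \<le> e * (1/2)^Suc n" and "\<And>k. 0 \<le> l k"
      by (rule null_set_interval_cover[OF assms(2)]) blast
    then show ?thesis by blast
  qed
  then obtain a l :: "nat \<Rightarrow> nat \<Rightarrow> real"
    where cover: "\<And>n. A \<subseteq> (\<Union>k. {a n k..<a n k + l n k})"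
      and row_sum: "\<And>n K. (\<Sum>k<K. l n k) \<le> e * (1/2)^Suc n" and nonneg: "\<And>n k. 0 \<le> l n k"
    by metis
  define P where "P k = (case prod_decode k of (n, i) \<Rightarrow> A \<inter> F n \<inter> {a n i..<a n i + l n i})" for k
  show ?thesis
  proof
    show "A \<subseteq> (\<Union>k. P k)"
    proof
      fix z assume "z \<in> A"
      then obtain n i where "z \<in> F n" "z \<in> {a n i..<a n i + l n i}"
        using A_F cover by blast
      then have "z \<in> P (prod_encode (n, i))"
        using \<open>z \<in> A\<close> by (simp add: P_def)
      then show "z \<in> (\<Union>k. P k)" by blast
    qed
    show "P k \<subseteq> {case_prod a (prod_decode k)..<
        case_prod a (prod_decode k) + case_prod l (prod_decode k)}" for k
      by (auto simp: P_def split: prod.split)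
    show "nowhere_dense (P k)" for k
      unfolding P_def by (auto split: prod.split intro: nowhere_dense_subset[OF F_nd])
    show "0 \<le> case_prod l (prod_decode k)" for k
      by (simp add: nonneg split: prod.split)
    show "(\<Sum>k<K. case_prod l (prod_decode k)) \<le> e" for K
    proof -
      have geometric: "(\<lambda>n. e * (1/2)^Suc n) sums e"
        using sums_mult[OF power_half_series, of e] by simp
      have "(\<Sum>k<K. case_prod l (prod_decode k)) \<le> (\<Sum>n<K. \<Sum>i<K. l n i)"
        by (rule sum_prod_decode_le) (rule nonneg)
      also have "\<dots> \<le> (\<Sum>n<K. e * (1/2)^Suc n)"
        by (intro sum_mono row_sum)
      also have "\<dots> \<le> (\<Sum>n. e * (1/2)^Suc n)"
        using \<open>0 < e\<close> by (intro sum_le_suminf sums_summable[OF geometric]) auto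
      also have "\<dots> = e"
        using geometric by (rule sums_unique[symmetric])
      finally show ?thesis .
    qed
  qed
qed

theorem mainTheorem17:
  fixes U A :: "real set"
  assumes "open U" and "U \<noteq> {}"
    and "meager A" and "A \<in> null_sets lebesgue"
  shows "\<exists>(D :: nat \<Rightarrow> real set) (x :: nat \<Rightarrow> real).
           (\<forall>k. D k \<subseteq> U) \<and> disjoint_family D \<and>
           nowhere_dense (\<Union>k. D k) \<and>
           A \<subseteq> (\<Union>k. (\<lambda>d. d + x k) ` D k)"
proof -
  obtain c r where "0 < r" and "ball c r \<subseteq> U"
    using assms(1,2) open_contains_ball by blast
  then have "{c..<c + r} \<subseteq> U"
    by (auto simp: dist_real_def subset_iff)
  obtain P :: "nat \<Rightarrow> real set" and a l :: "nat \<Rightarrow> real"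
    where A_P: "A \<subseteq> (\<Union>k. P k)" and P_sub: "\<And>k. P k \<subseteq> {a k..<a k + l k}"
      and P_nd: "\<And>k. nowhere_dense (P k)" and l_sum: "\<And>K. (\<Sum>k<K. l k) \<le> r"
      and l_nonneg: "\<And>k. 0 \<le> l k"
    by (rule meager_null_set_pieces[OF assms(3,4) \<open>0 < r\<close>]) blast
  obtain D :: "nat \<Rightarrow> real set" and x :: "nat \<Rightarrow> real"
    where D_sub: "\<And>k. D k \<subseteq> {c..<c + r}" and "disjoint_family D" and "nowhere_dense (\<Union>k. D k)"
      and translate_D: "\<And>k. (\<lambda>d. d + x k) ` D k = P k"
    by (rule translate_into_consecutive_intervals[OF l_nonneg P_sub P_nd l_sum]) blast
  show ?thesis
  proof (intro exI conjI)
    show "\<forall>k. D k \<subseteq> U"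
      using D_sub \<open>{c..<c + r} \<subseteq> U\<close> by blast
    show "A \<subseteq> (\<Union>k. (\<lambda>d. d + x k) ` D k)"
      unfolding translate_D by (rule A_P)
  qed fact+
qed

end
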